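(* Let $m\geq 3$, let $\mathcal{S}$ be a locating-dominating set of the grid graph $G_{3,m}=P_3\square P_m$, and let $\mathcal{B}$ be a $(3\times 3)$-block of $G_{3,m}$. Then $|\mathcal{B}\cap\mathcal{S}|\geq 2$.
   Context: $P_n$ is the path on $n$ vertices, $\square$ the Cartesian product of graphs, and $G_{n,m}=P_n\square P_m$ is viewed as a grid with $n$ rows and $m$ columns. A $(n\times \ell)$-block of $G_{n,m}$ is the set of vertices in $\ell$ consecutive columns. For $C\subseteq V(G)$ and $v\in V(G)$ let $I(v)=N[v]\cap C$ ($N[v]$ the closed neighborhood). $C$ is a locating-dominating set if $I(v)\neq\emptyset$ for all $v\in V(G)\setminus C$ and $I(u)\neq I(v)$ for all distinct $u,v\in V(G)\setminus C$. *)

theory Defs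
  imports Main
begin

text \<open>Grid graph G_{n,m} = P_n \<box> P_m: vertices (i,j) with row i < n, column j < m
  (0-indexed); two vertices adjacent iff they differ by 1 in exactly one coordinate.\<close>

definition grid_vertices :: "nat \<Rightarrow> nat \<Rightarrow> (nat \<times> nat) set" where
  "grid_vertices n m = {(i, j). i < n \<and> j < m}"

definition grid_adj :: "nat \<times> nat \<Rightarrow> nat \<times> nat \<Rightarrow> bool" where
  "grid_adj u v \<longleftrightarrow>
     (fst u = fst v \<and> (snd u = snd v + 1 \<or> snd v = snd u + 1)) \<or>
     (snd u = snd v \<and> (fst u = fst v + 1 \<or> fst v = fst u + 1))"

definition grid_closed_nbhd :: "nat \<Rightarrow> nat \<Rightarrow> nat \<times> nat \<Rightarrow> (nat \<times> nat) set" where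
  "grid_closed_nbhd n m v = {u \<in> grid_vertices n m. u = v \<or> grid_adj u v}"

definition locating_dominating :: "nat \<Rightarrow> nat \<Rightarrow> (nat \<times> nat) set \<Rightarrow> bool" where
  "locating_dominating n m C \<longleftrightarrow>
     C \<subseteq> grid_vertices n m \<and>
     (\<forall>v \<in> grid_vertices n m - C. grid_closed_nbhd n m v \<inter> C \<noteq> {}) \<and>
     (\<forall>u \<in> grid_vertices n m - C. \<forall>v \<in> grid_vertices n m - C.
        u \<noteq> v \<longrightarrow> grid_closed_nbhd n m u \<inter> C \<noteq> grid_closed_nbhd n m v \<inter> C)"

definition grid_block :: "nat \<Rightarrow> nat \<Rightarrow> nat \<Rightarrow> nat \<Rightarrow> (nat \<times> nat) set" where
  "grid_block n m l k = {(i, j). i < n \<and> k \<le> j \<and> j < k + l \<and> j < m}"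

end

theory Submission
  imports Defs
begin

text \<open>The middle column of a (3 \<times> 3)-block carries three vertices whose closed neighbourhoods
  lie inside the block. If two of them belong to S we are done. Otherwise two of them, u and v,
  lie outside S; their traces I(u), I(v) are nonempty (domination) and distinct (location), and
  both are subsets of the block, so the block meets S in at least two vertices.\<close>

lemma card_ge_2_of_distinct_nonempty_subsets:
  assumes "finite X" "A \<subseteq> X" "B \<subseteq> X" "A \<noteq> {}" "B \<noteq> {}" "A \<noteq> B"
  shows "2 \<le> card X"
proof (rule ccontr)
  assume "\<not> 2 \<le> card X"
  then have X: "\<forall>x\<in>X. \<forall>y\<in>X. x = y"
    using card_le_Suc0_iff_eq[OF assms(1)] by simp
  obtain a where "a \<in> A" using assms(4) by blast
  with X assms(2) have "X \<subseteq> {a}" by blast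
  with assms(2-5) have "A = {a}" "B = {a}" by (blast dest: subset_singletonD)+
  with assms(6) show False by simp
qed

lemma locating_dominating_card_ge_2:
  assumes "locating_dominating n m C" "finite A"
    and "u \<in> grid_vertices n m - C" "v \<in> grid_vertices n m - C" "u \<noteq> v"
    and "grid_closed_nbhd n m u \<subseteq> A" "grid_closed_nbhd n m v \<subseteq> A"
  shows "2 \<le> card (A \<inter> C)"
proof (rule card_ge_2_of_distinct_nonempty_subsets)
  show "grid_closed_nbhd n m u \<inter> C \<noteq> {}" "grid_closed_nbhd n m v \<inter> C \<noteq> {}"
    and "grid_closed_nbhd n m u \<inter> C \<noteq> grid_closed_nbhd n m v \<inter> C"
    using assms(1,3-5) unfolding locating_dominating_def by blast+
qed (use assms(2,6,7) in auto)

lemma finite_grid_block: "finite (grid_block n m l k)"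
  by (rule finite_subset[of _ "{..<n} \<times> {..<m}"]) (auto simp: grid_block_def)

lemma grid_closed_nbhd_subset_block:
  "grid_closed_nbhd n m (i, k + 1) \<subseteq> grid_block n m 3 k"
  by (auto simp: grid_closed_nbhd_def grid_block_def grid_vertices_def grid_adj_def)

lemma block_card_ge_2_of_middle_column:
  assumes "locating_dominating n m S" "k + 2 \<le> m"
    and "i < n" "j < n" "i \<noteq> j" "(i, k + 1) \<in> S \<longleftrightarrow> (j, k + 1) \<in> S"
  shows "2 \<le> card (grid_block n m 3 k \<inter> S)"
proof -
  have middle: "(i, k + 1) \<in> grid_vertices n m \<inter> grid_block n m 3 k"
    "(j, k + 1) \<in> grid_vertices n m \<inter> grid_block n m 3 k"
    using assms(2-4) by (auto simp: grid_vertices_def grid_block_def)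
  show ?thesis
  proof (cases "(i, k + 1) \<in> S")
    case True
    then have "{(i, k + 1), (j, k + 1)} \<subseteq> grid_block n m 3 k \<inter> S"
      using assms(6) middle by blast
    from card_mono[OF _ this] show ?thesis
      using assms(5) finite_grid_block by auto
  next
    case False
    with assms(3-6) middle show ?thesis
      using locating_dominating_card_ge_2[OF assms(1) finite_grid_block,
          of "(i, k + 1)" "(j, k + 1)"] grid_closed_nbhd_subset_block[of n m _ k]
      by auto
  qed
qed

theorem lemma4p10:
  fixes m k :: nat and S :: "(nat \<times> nat) set"
  assumes "m \<ge> 3"
    and "locating_dominating 3 m S"
    and "k + 3 \<le> m"
  shows "card (grid_block 3 m 3 k \<inter> S) \<ge> 2"
proof -
  have "((0, k + 1) \<in> S \<longleftrightarrow> (1, k + 1) \<in> S) \<or> ((0, k + 1) \<in> S \<longleftrightarrow> (2, k + 1) \<in> S)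
      \<or> ((1, k + 1) \<in> S \<longleftrightarrow> (2, k + 1) \<in> S)"
    by blast
  moreover have "k + 2 \<le> m" using assms(3) by simp
  ultimately show ?thesis
    using block_card_ge_2_of_middle_column[OF assms(2), where i = 0 and j = 1]
      block_card_ge_2_of_middle_column[OF assms(2), where i = 0 and j = 2]
      block_card_ge_2_of_middle_column[OF assms(2), where i = 1 and j = 2]
    by auto
qed

end
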